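(* Let $q$ be a prime power, let $n\le m$, and let $\alpha\in\mathbb{F}_{q^m}$ be a normal element, i.e. $\{\alpha^{[0]},\dots,\alpha^{[m-1]}\}$ is a basis of $\mathbb{F}_{q^m}$ over $\mathbb{F}_q$. Let $d\ge2$ and let $\mathcal{C}\subseteq\mathbb{F}_{q^m}^n$ be the Gabidulin code $\{c: \sum_{j=0}^{n-1}\alpha^{[i+j]}c_j=0,\ i=0,\dots,d-2\}$. Let $c\in\mathcal{C}$, let $e\in\mathbb{F}_{q^m}^n$ have rank $\tau\le(d-1)/2$, and let $r=c+e$. Write $e=\sum_{j=1}^{\tau}L_jV_j$ with $L_j\in\mathbb{F}_q^n$ and $V_j\in\mathbb{F}_{q^m}$, and set $X_j=L_j^Th$ where $h=(\alpha^{[0]},\dots,\alpha^{[n-1]})^T$. Define the syndromes $S_\ell=\sum_{i=0}^{n-1}\alpha^{[i+\ell]}r_i$ for $\ell=0,\dots,d-2$ and $\tilde S_\ell=S_{d-2-\ell}^{[\ell-d+2]}$ for $\ell=0,\dots,d-2$. Let $\Gamma(x)=\sum_{i=0}^{\tau}\Gamma_ix^{[i]}$ be the minimal $q$-polynomial of $\{V_1,\dots,V_\tau\}$ and $\Lambda(x)=\sum_{i=0}^{\tau}\Lambda_ix^{[i]}$ the minimal $q$-polynomial of $\{X_1,\dots,X_\tau\}$. Extend $e$ to length $m$ by $e_n=\dots=e_{m-1}=0$, let $E(x)=\sum_{j=0}^{m-1}E_jx^{[j]}$ with $E_j=\sum_{i=0}^{m-1}e_i\alpha^{[i+j]}$ be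 its $q$-transform with respect to $\alpha$, and let $\bar E(x)$ be the full $q$-reverse of $E(x)$. Then $$\Gamma(x)\otimes E(x)\equiv0 \pmod{x^{[m]}-x},\qquad \Lambda(x)\otimes\bar E(x)\equiv0 \pmod{x^{[m]}-x}.$$ In particular, $\sum_{i=0}^{\tau}\Gamma_iS_{\ell-i}^{[i]}=0$ and $\sum_{i=0}^{\tau}\Lambda_i\tilde S_{\ell-i}^{[i]}=0$ for $\ell=\tau,\dots,d-2$.
   Context: $x^{[i]}$ denotes $x^{q^i}$ (negative $i$ interpreted modulo $m$, i.e. $a^{[i]}=a^{q^{i\bmod m}}$ for $a\in\mathbb{F}_{q^m}$). The rank of $v\in\mathbb{F}_{q^m}^n$ is the rank over $\mathbb{F}_q$ of the $n\times m$ matrix whose $i$th row is the coordinate vector of $v_i$ in a fixed $\mathbb{F}_q$-basis of $\mathbb{F}_{q^m}$. A $q$-polynomial over $\mathbb{F}_{q^m}$ is $\sum_if_ix^{[i]}$ with $f_i\in\mathbb{F}_{q^m}$; its $q$-degree is the largest $i$ with $f_i\ne0$. The minimal $q$-polynomial of a set $\mathcal{S}\subseteq\mathbb{F}_{q^m}$ is the unique $q$-polynomial $M(x)=\sum_{i=0}^tM_ix^{[i]}$ with $M_0=1$ and least $q$-degree $t$ whose roots include $\mathcal{S}$. Symbolic multiplication is composition $f(x)\otimes g(x)=f(g(x))$, and reduction modulo $x^{[m]}-x$ is the remainder upon division by $x^{q^m}-x$. Coefficients of length-$m$ sequences are indexed cyclically ($f_i=f_{i\bmod m}$), and the full $q$-reverse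 of $f(x)=\sum_{i=0}^{m-1}f_ix^{[i]}$ is $\bar f(x)=\sum_{i=0}^{m-1}f_{-i}^{[i]}x^{[i]}$. *)

theory Defs
  imports "HOL-Computational_Algebra.Polynomial" "HOL-Computational_Algebra.Primes"
begin

definition Fq :: "nat \<Rightarrow> 'a::field set" where
  "Fq q = {x. x ^ q = x}"

text \<open>x^[k] for a possibly negative integer k, interpreted modulo m.\<close>
definition frobz :: "nat \<Rightarrow> nat \<Rightarrow> 'a::field \<Rightarrow> int \<Rightarrow> 'a" where
  "frobz q m a k = a ^ (q ^ nat (k mod int m))"

definition Fq_indep :: "nat \<Rightarrow> 'b set \<Rightarrow> ('b \<Rightarrow> 'a::field) \<Rightarrow> bool" where
  "Fq_indep q I w \<longleftrightarrow>
     (\<forall>c. (\<forall>i\<in>I. c i \<in> Fq q) \<longrightarrow> (\<Sum>i\<in>I. c i * w i) = 0 \<longrightarrow> (\<forall>i\<in>I. c i = 0))"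

definition Fq_spans :: "nat \<Rightarrow> 'b set \<Rightarrow> ('b \<Rightarrow> 'a::field) \<Rightarrow> bool" where
  "Fq_spans q I w \<longleftrightarrow>
     (\<forall>x. \<exists>c. (\<forall>i\<in>I. c i \<in> Fq q) \<and> x = (\<Sum>i\<in>I. c i * w i))"

definition normal_elem :: "nat \<Rightarrow> nat \<Rightarrow> 'a::field \<Rightarrow> bool" where
  "normal_elem q m \<alpha> \<longleftrightarrow>
     Fq_indep q {..<m} (\<lambda>i. \<alpha> ^ (q ^ i)) \<and> Fq_spans q {..<m} (\<lambda>i. \<alpha> ^ (q ^ i))"

text \<open>Rank over F_q of a length-n vector v (entries v 0, ..., v (n-1)): the rank of
  the n x m coordinate matrix, i.e. its row rank = the maximal number of
  F_q-linearly independent entries.\<close>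
definition rank_q :: "nat \<Rightarrow> nat \<Rightarrow> (nat \<Rightarrow> 'a::field) \<Rightarrow> nat" where
  "rank_q q n v = Max {card I | I. I \<subseteq> {..<n} \<and> Fq_indep q I v}"

text \<open>q-polynomials sum_i f_i x^[i] are represented by their coefficient sequences
  with finite support.\<close>
definition is_qpoly :: "(nat \<Rightarrow> 'a::zero) \<Rightarrow> bool" where
  "is_qpoly f \<longleftrightarrow> finite {i. f i \<noteq> 0}"

definition qdeg :: "(nat \<Rightarrow> 'a::zero) \<Rightarrow> nat" where
  "qdeg f = Max {i. f i \<noteq> 0}"

definition qeval :: "nat \<Rightarrow> (nat \<Rightarrow> 'a::field) \<Rightarrow> 'a \<Rightarrow> 'a" where
  "qeval q f x = (\<Sum>i\<in>{i. f i \<noteq> 0}. f i * x ^ (q ^ i))"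

definition qpoly_poly :: "nat \<Rightarrow> (nat \<Rightarrow> 'a::field) \<Rightarrow> 'a poly" where
  "qpoly_poly q f = (\<Sum>i\<in>{i. f i \<noteq> 0}. monom (f i) (q ^ i))"

definition is_min_qpoly :: "nat \<Rightarrow> 'a::field set \<Rightarrow> (nat \<Rightarrow> 'a) \<Rightarrow> bool" where
  "is_min_qpoly q S M \<longleftrightarrow>
     is_qpoly M \<and> M 0 = 1 \<and> (\<forall>s\<in>S. qeval q M s = 0) \<and>
     (\<forall>f. is_qpoly f \<and> f 0 = 1 \<and> (\<forall>s\<in>S. qeval q f s = 0) \<longrightarrow> qdeg M \<le> qdeg f)"

text \<open>Symbolic product f \<otimes> g = f(g(x)) is congruent to 0 modulo x^[m] - x.\<close>
definition qcomp_zero_mod :: "nat \<Rightarrow> nat \<Rightarrow> (nat \<Rightarrow> 'a::field) \<Rightarrow> (nat \<Rightarrow> 'a) \<Rightarrow> bool" where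
  "qcomp_zero_mod q m f g \<longleftrightarrow>
     (monom 1 (q ^ m) - monom 1 1) dvd pcompose (qpoly_poly q f) (qpoly_poly q g)"

definition qreverse :: "nat \<Rightarrow> nat \<Rightarrow> (nat \<Rightarrow> 'a::field) \<Rightarrow> nat \<Rightarrow> 'a" where
  "qreverse q m f i = (if i < m then f ((m - i) mod m) ^ (q ^ i) else 0)"

end

(*
  Put X_k = L_k^T h. As the L_k have entries in F_q, the q-transform of e and the syndromes
  (to which the codeword contributes nothing) are E_j = S_j = \<Sum>_k V_k X_k^[j], the q-reverse of
  E has coefficients \<Sum>_k X_k V_k^[j], and the reversed syndromes are \<Sum>_k X_k (V_k^[c])^[l] with
  c = 2 - d mod m. Hence E(y) = \<Sum>_k Tr(X_k y) V_k, where Tr is the trace onto F_q, and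
  F_q-linearity of \<Gamma> gives \<Gamma>(E(y)) = \<Sum>_k Tr(X_k y) \<Gamma>(V_k) = 0 for every y in F_{q^m}; a
  polynomial vanishing on all of F_{q^m} is divisible by x^[m] - x. Exchanging the roles of V and X
  handles \<Lambda>. The key equations are the coefficientwise form of the same computation,
  \<Sum>_i \<Gamma>_i S_{l-i}^[i] = \<Sum>_k X_k^[l] \<Gamma>(V_k) = 0, which needs \<Gamma> to have q-degree at most \<tau>:
  any \<tau> elements are roots of a q-polynomial of q-degree \<tau>, built by adjoining one root at a time.
*)

theory Submission
  imports Defs "HOL-Number_Theory.Residues"
begin

lemma finite_field_power_card_eq_self:
  fixes x :: "'a::{finite,field}"
  shows "x ^ card (UNIV :: 'a set) = x"
proof -
  have pos: "card (UNIV :: 'a set) > 0" by (rule finite_UNIV_card_ge_0) (rule finite_UNIV)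
  have fermat: "x ^ (card (UNIV :: 'a set) - 1) = 1" if "x \<noteq> 0"
  proof -
    (* Lagrange in the multiplicative group: finite_field_power_card_eq_same needs sort finite_field. *)
    define G :: "'a monoid" where "G = \<lparr>carrier = UNIV - {0}, monoid.mult = (*), one = 1\<rparr>"
    have group: "group G"
    proof (rule groupI)
      show "\<exists>y\<in>carrier G. y \<otimes>\<^bsub>G\<^esub> z = \<one>\<^bsub>G\<^esub>" if "z \<in> carrier G" for z
        using that by (intro bexI[of _ "inverse z"]) (auto simp: G_def)
    qed (auto simp: G_def mult.assoc)
    have pow: "x [^]\<^bsub>G\<^esub> n = x ^ n" for n :: nat
      by (induction n) (simp_all add: G_def)
    have order: "order G = card (UNIV :: 'a set) - 1"
      by (simp add: order_def G_def card_Diff_singleton)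
    have "x ^ (card (UNIV :: 'a set) - 1) = x [^]\<^bsub>G\<^esub> order G"
      by (simp only: pow order)
    also have "\<dots> = \<one>\<^bsub>G\<^esub>"
      using that by (intro group.pow_order_eq_1[OF group]) (simp add: G_def)
    also have "\<one>\<^bsub>G\<^esub> = 1"
      by (simp add: G_def)
    finally show ?thesis .
  qed
  have split: "x ^ card (UNIV :: 'a set) = x * x ^ (card (UNIV :: 'a set) - 1)"
    by (simp only: power_Suc[symmetric] Suc_diff_1[OF pos])
  show ?thesis
  proof (cases "x = 0")
    case True
    then show ?thesis using pos by (simp add: zero_power)
  next
    case False
    then show ?thesis by (simp only: split fermat[OF False] mult_1_right)
  qed
qed

lemma CHAR_eq_if_card_prime_power:
  assumes "prime p" and "card (UNIV :: 'a::{finite,field} set) = p ^ k"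
  shows "CHAR('a) = p"
proof -
  have "prime CHAR('a)"
    by (rule prime_CHAR_semidom) (simp add: finite_imp_CHAR_pos)
  moreover have "CHAR('a) dvd p ^ k"
    using CHAR_dvd_CARD[where ?'a = 'a] assms(2) by simp
  ultimately show ?thesis
    using assms(1) prime_dvd_power primes_dvd_imp_eq by blast
qed

lemma Fq_power_q_power:
  assumes "c \<in> Fq q"
  shows "c ^ (q ^ j) = (c :: 'a::field)"
proof (induction j)
  case (Suc j)
  have "c ^ (q ^ Suc j) = (c ^ q) ^ (q ^ j)" by (simp add: power_mult mult.commute)
  with assms Suc.IH show ?case by (simp add: Fq_def)
qed simp

lemma power_q_power_q_power: "(x ^ (q ^ i)) ^ (q ^ j) = (x :: 'a::monoid_mult) ^ (q ^ (i + j))"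
  by (simp add: power_mult[symmetric] power_add)

lemma power_q_power_Suc: "(x ^ (q ^ i)) ^ q = (x :: 'a::monoid_mult) ^ (q ^ Suc i)"
  by (simp add: power_mult[symmetric] mult.commute)

lemma qeval_eq_sum_superset:
  assumes "finite A" and "{i. f i \<noteq> 0} \<subseteq> A"
  shows "qeval q f x = (\<Sum>i\<in>A. f i * x ^ (q ^ i))"
  unfolding qeval_def using assms by (intro sum.mono_neutral_left) auto

lemma qeval_eq_sum_atMost:
  assumes "\<forall>i>N. f i = 0"
  shows "qeval q f x = (\<Sum>i\<le>N. f i * x ^ (q ^ i))"
  using assms by (intro qeval_eq_sum_superset) (auto simp: not_less[symmetric])

lemma poly_qpoly_poly: "poly (qpoly_poly q f) x = qeval q f x"
  unfolding qpoly_poly_def qeval_def by (simp add: poly_sum poly_monom)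

context
  fixes q m :: nat
  assumes card_eq: "card (UNIV :: 'a::{finite,field} set) = q ^ m"
    and q_prime_power: "\<exists>p k. prime p \<and> k > 0 \<and> q = p ^ k"
begin

lemma q_ge_2: "q \<ge> 2"
proof -
  obtain p k where p: "prime p" and k: "k > 0" and q: "q = p ^ k" using q_prime_power by blast
  have "2 \<le> p" using p by (rule prime_ge_2_nat)
  also have "p \<le> p ^ k" using \<open>2 \<le> p\<close> k by (intro self_le_power) simp_all
  finally show ?thesis by (simp add: q)
qed

lemma m_pos: "m > 0"
proof (rule ccontr)
  assume "\<not> m > 0"
  then have "card (UNIV :: 'a set) = 1" using card_eq by simp
  moreover have "card {0 :: 'a, 1} \<le> card (UNIV :: 'a set)" by (rule card_mono) auto
  ultimately show False by simp
qed

lemma frobenius_sum: "sum f A ^ (q ^ j) = (\<Sum>i\<in>A. (f i :: 'a) ^ (q ^ j))"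
proof -
  obtain p k where p: "prime p" and q: "q = p ^ k" using q_prime_power by blast
  have "CHAR('a) = p"
    using card_eq by (intro CHAR_eq_if_card_prime_power[OF p]) (simp add: q power_mult[symmetric])
  then show ?thesis
    using p by (intro freshmans_dream_sum'[where n = "k * j"]) (simp_all add: q power_mult)
qed

lemma frobenius_period: "(x :: 'a) ^ (q ^ m) = x"
  using finite_field_power_card_eq_self card_eq by metis

lemma frobenius_mod: "(x :: 'a) ^ (q ^ i) = x ^ (q ^ (i mod m))"
proof -
  have period: "x ^ (q ^ (m * j)) = x" for j
  proof (induction j)
    case (Suc j)
    have "x ^ (q ^ (m * Suc j)) = (x ^ (q ^ m)) ^ (q ^ (m * j))"
      by (simp add: power_q_power_q_power)
    with Suc.IH show ?case by (simp add: frobenius_period)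
  qed simp
  have "x ^ (q ^ i) = (x ^ (q ^ (m * (i div m)))) ^ (q ^ (i mod m))"
    by (simp add: power_q_power_q_power)
  with period show ?thesis by simp
qed

lemma frobenius_cong:
  assumes "int i mod int m = int j mod int m"
  shows "(x :: 'a) ^ (q ^ i) = x ^ (q ^ j)"
proof -
  have "i mod m = j mod m" using assms by (simp flip: zmod_int)
  then show ?thesis using frobenius_mod[of x i] frobenius_mod[of x j] by simp
qed

lemma trace_in_Fq: "(\<Sum>j<m. (y :: 'a) ^ (q ^ j)) \<in> Fq q"
proof -
  have "(\<Sum>j<m. y ^ (q ^ j)) ^ q = (\<Sum>j<m. y ^ (q ^ Suc j))"
    using frobenius_sum[of "\<lambda>j. y ^ (q ^ j)" "{..<m}" 1] by (simp only: power_one_right power_q_power_Suc)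
  also have "\<dots> = (\<Sum>j<Suc m. y ^ (q ^ j)) - y"
    by (subst sum.lessThan_Suc_shift) simp
  also have "\<dots> = (\<Sum>j<m. y ^ (q ^ j))"
    by (simp add: frobenius_period)
  finally show ?thesis by (simp add: Fq_def)
qed

lemma qeval_Fq_linear:
  assumes "\<forall>k\<in>K. t k \<in> Fq q"
  shows "qeval q f (\<Sum>k\<in>K. t k * w k) = (\<Sum>k\<in>K. t k * qeval q f (w k :: 'a))"
proof -
  have "qeval q f (\<Sum>k\<in>K. t k * w k) = (\<Sum>i | f i \<noteq> 0. f i * (\<Sum>k\<in>K. t k * w k ^ (q ^ i)))"
    unfolding qeval_def using assms
    by (intro sum.cong refl) (simp add: frobenius_sum power_mult_distrib Fq_power_q_power)
  also have "\<dots> = (\<Sum>k\<in>K. t k * qeval q f (w k))"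
    unfolding qeval_def sum_distrib_left by (subst sum.swap) (simp add: mult_ac)
  finally show ?thesis .
qed

lemma qeval_frobenius_shift:
  assumes "\<forall>i>N. f i = 0"
  shows "qeval q (\<lambda>i. if i = 0 then 0 else f (i - 1) ^ q) x = qeval q f (x :: 'a) ^ q"
proof -
  have "qeval q (\<lambda>i. if i = 0 then 0 else f (i - 1) ^ q) x
      = (\<Sum>i\<le>Suc N. (if i = 0 then 0 else f (i - 1) ^ q) * x ^ (q ^ i))"
    using assms q_ge_2 by (intro qeval_eq_sum_atMost) auto
  also have "\<dots> = (\<Sum>i\<le>N. (f i * x ^ (q ^ i)) ^ q)"
    by (subst sum.atMost_Suc_shift) (simp add: power_mult_distrib power_q_power_Suc)
  also have "\<dots> = qeval q f x ^ q"
    using frobenius_sum[of "\<lambda>i. f i * x ^ (q ^ i)" "{..N}" 1] qeval_eq_sum_atMost[OF assms, of q x]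
    by (simp only: power_one_right)
  finally show ?thesis .
qed

lemma exists_annihilating_qpoly:
  assumes "finite S"
  shows "\<exists>f. f 0 = 1 \<and> (\<forall>i>card S. f i = 0) \<and> (\<forall>s\<in>S. qeval q f s = (0 :: 'a))"
  using assms
proof (induction S rule: finite_induct)
  case empty
  show ?case by (intro exI[of _ "\<lambda>i. if i = 0 then 1 else 0"]) simp
next
  case (insert v S)
  then obtain f where f0: "f 0 = 1" and f_support: "\<forall>i>card S. f i = 0"
    and f_roots: "\<forall>s\<in>S. qeval q f s = 0" by blast
  have card: "card (insert v S) = Suc (card S)" using insert by simp
  show ?case
  proof (cases "qeval q f v = 0")
    case True
    with f0 f_support f_roots card show ?thesis by (intro exI[of _ f]) auto
  next
    case False
    (* g(x) = f(x) - f(x)^q / c keeps the roots of f and kills v, because f(v)^q = c f(v). *)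
    define c where "c = qeval q f v ^ (q - 1)"
    define h where "h i = (if i = 0 then 0 else f (i - 1) ^ q)" for i
    define g where "g i = f i - h i / c" for i
    have g_support: "\<forall>i>Suc (card S). g i = 0"
      using f_support q_ge_2 by (auto simp: g_def h_def)
    have h_support: "\<forall>i>Suc (card S). h i = 0"
      using f_support q_ge_2 by (auto simp: h_def)
    have g_eval: "qeval q g x = qeval q f x - qeval q f x ^ q / c" for x
    proof -
      have "qeval q g x = (\<Sum>i\<le>Suc (card S). g i * x ^ (q ^ i))"
        by (rule qeval_eq_sum_atMost[OF g_support])
      also have "\<dots> = (\<Sum>i\<le>Suc (card S). f i * x ^ (q ^ i)) - (\<Sum>i\<le>Suc (card S). h i * x ^ (q ^ i)) / c"
        by (simp only: g_def left_diff_distrib sum_subtractf sum_divide_distrib times_divide_eq_left)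
      also have "(\<Sum>i\<le>Suc (card S). f i * x ^ (q ^ i)) = qeval q f x"
        using f_support by (intro qeval_eq_sum_atMost[symmetric]) simp
      also have "(\<Sum>i\<le>Suc (card S). h i * x ^ (q ^ i)) = qeval q h x"
        by (rule qeval_eq_sum_atMost[OF h_support, symmetric])
      also have "qeval q h x = qeval q f x ^ q"
        unfolding h_def by (rule qeval_frobenius_shift[OF f_support])
      finally show ?thesis .
    qed
    moreover have "qeval q f v ^ q = c * qeval q f v"
      using q_ge_2 by (simp add: c_def power_Suc[symmetric] mult.commute)
    ultimately have "qeval q g v = 0"
      using False by (simp add: c_def g_eval)
    moreover have "\<forall>s\<in>S. qeval q g s = 0"
      using f_roots q_ge_2 by (simp add: g_eval)
    moreover have "g 0 = 1" by (simp add: g_def h_def f0)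
    ultimately show ?thesis
      using g_support card by (intro exI[of _ g]) simp
  qed
qed

lemma min_qpoly_coeff_eq_0:
  assumes "finite S" and min: "is_min_qpoly q S M" and "card S < i"
  shows "M i = (0 :: 'a)"
proof (rule ccontr)
  assume "M i \<noteq> 0"
  obtain f where f0: "f 0 = 1" and f_support: "\<forall>i>card S. f i = 0"
    and f_roots: "\<forall>s\<in>S. qeval q f s = (0 :: 'a)"
    using exists_annihilating_qpoly[OF \<open>finite S\<close>] by blast
  have f_support': "{i. f i \<noteq> 0} \<subseteq> {..card S}"
    using f_support by (auto simp: not_less[symmetric])
  have "i \<le> qdeg M"
    unfolding qdeg_def using min \<open>M i \<noteq> 0\<close> by (intro Max_ge) (simp_all add: is_min_qpoly_def is_qpoly_def)
  also have "qdeg M \<le> qdeg f"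
    using min f0 f_roots finite_subset[OF f_support'] by (simp add: is_min_qpoly_def is_qpoly_def)
  also have "qdeg f \<le> card S"
    unfolding qdeg_def using f0 f_support' finite_subset[OF f_support'] by (intro Max.boundedI) (auto intro: exI[of _ 0])
  finally show False using \<open>card S < i\<close> by simp
qed

lemma min_qpoly_image_coeff_eq_0:
  assumes "finite K" and "is_min_qpoly q (W ` K) M" and "card K < i"
  shows "M i = (0 :: 'a)"
  using assms card_image_le[of K W] by (intro min_qpoly_coeff_eq_0) auto

lemma vanishing_poly_dvd:
  assumes "\<And>x. poly p (x :: 'a) = 0"
  shows "(Polynomial.monom 1 (q ^ m) - Polynomial.monom 1 1) dvd p"
proof -
  define D :: "'a poly" where "D = Polynomial.monom 1 (q ^ m) - Polynomial.monom 1 1"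
  have "1 < q ^ m" using q_ge_2 m_pos by (intro one_less_power) simp_all
  then have deg_D: "degree D = q ^ m"
    unfolding D_def diff_conv_add_uminus by (subst degree_add_eq_left) (simp_all add: degree_monom_eq)
  then have "D \<noteq> 0" using \<open>1 < q ^ m\<close> by (metis degree_0 not_less_zero)
  have D_roots: "poly D x = 0" for x
    by (simp add: D_def poly_monom frobenius_period)
  have "p mod D = 0"
  proof (rule ccontr)
    assume nonzero: "p mod D \<noteq> 0"
    have "poly (p mod D) x = 0" for x
      using assms[of x] D_roots[of x] div_mult_mod_eq[of p D] by (metis add_0 mult_zero_right poly_add poly_mult)
    then have "card (UNIV :: 'a set) \<le> degree (p mod D)"
      using card_poly_roots_bound[OF nonzero] by simp
    also have "\<dots> < degree D"
      using nonzero \<open>D \<noteq> 0\<close> by (rule degree_mod_less'[rotated])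
    finally show False using deg_D card_eq by simp
  qed
  then show ?thesis by (simp add: D_def dvd_eq_mod_eq_0)
qed

lemma error_syndrome_trace_form:
  assumes L_Fq: "\<forall>k\<in>K. \<forall>i<n. L k i \<in> Fq q"
    and e: "\<forall>i<n. e i = (\<Sum>k\<in>K. L k i * V k)"
  shows "(\<Sum>i<n. \<alpha> ^ (q ^ (i + j)) * e i) = (\<Sum>k\<in>K. V k * (\<Sum>i<n. L k i * \<alpha> ^ (q ^ i)) ^ (q ^ j) :: 'a)"
proof -
  have "(\<Sum>i<n. \<alpha> ^ (q ^ (i + j)) * e i) = (\<Sum>i<n. \<Sum>k\<in>K. V k * (L k i * \<alpha> ^ (q ^ (i + j))))"
    using e by (intro sum.cong refl) (simp add: sum_distrib_left mult_ac)
  also have "\<dots> = (\<Sum>k\<in>K. V k * (\<Sum>i<n. L k i * \<alpha> ^ (q ^ (i + j))))"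
    by (subst sum.swap) (simp add: sum_distrib_left)
  also have "\<dots> = (\<Sum>k\<in>K. V k * (\<Sum>i<n. L k i * \<alpha> ^ (q ^ i)) ^ (q ^ j))"
    using L_Fq
    by (intro sum.cong refl) (simp add: frobenius_sum power_mult_distrib Fq_power_q_power power_q_power_q_power)
  finally show ?thesis .
qed

lemma syndrome_trace_form:
  assumes code: "\<forall>i\<le>D. (\<Sum>j<n. \<alpha> ^ (q ^ (i + j)) * c j) = 0"
    and L_Fq: "\<forall>k\<in>K. \<forall>i<n. L k i \<in> Fq q"
    and e: "\<forall>i<n. e i = (\<Sum>k\<in>K. L k i * V k)"
    and "l \<le> D"
  shows "(\<Sum>i<n. \<alpha> ^ (q ^ (i + l)) * (c i + e i))
       = (\<Sum>k\<in>K. V k * (\<Sum>i<n. L k i * \<alpha> ^ (q ^ i)) ^ (q ^ l) :: 'a)"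
proof -
  have "(\<Sum>i<n. \<alpha> ^ (q ^ (i + l)) * c i) = (\<Sum>i<n. \<alpha> ^ (q ^ (l + i)) * c i)"
    by (simp only: add.commute)
  also have "\<dots> = 0"
    using code \<open>l \<le> D\<close> by blast
  finally show ?thesis
    using error_syndrome_trace_form[OF L_Fq e] by (simp add: distrib_left sum.distrib)
qed

lemma q_transform_trace_form:
  assumes "n \<le> m"
    and L_Fq: "\<forall>k\<in>K. \<forall>i<n. L k i \<in> Fq q"
    and e: "\<forall>i<n. e i = (\<Sum>k\<in>K. L k i * V k)"
  shows "(if j < m then \<Sum>i<m. (if i < n then e i else 0) * \<alpha> ^ (q ^ (i + j)) else 0)
       = (if j < m then \<Sum>k\<in>K. V k * (\<Sum>i<n. L k i * \<alpha> ^ (q ^ i)) ^ (q ^ j) else (0 :: 'a))"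
proof -
  have "(\<Sum>i<m. (if i < n then e i else 0) * \<alpha> ^ (q ^ (i + j))) = (\<Sum>i<n. \<alpha> ^ (q ^ (i + j)) * e i)"
    using \<open>n \<le> m\<close> by (subst sum.mono_neutral_right[of "{..<m}" "{..<n}"]) (auto simp: mult.commute)
  then show ?thesis
    using error_syndrome_trace_form[OF L_Fq e] by simp
qed

lemma qeval_trace_form:
  assumes E: "\<And>j. E j = (if j < m then \<Sum>k\<in>K. V k * X k ^ (q ^ j) else 0)"
  shows "qeval q E y = (\<Sum>k\<in>K. (\<Sum>j<m. (X k * y) ^ (q ^ j)) * (V k :: 'a))"
proof -
  have "qeval q E y = (\<Sum>j<m. E j * y ^ (q ^ j))"
    by (rule qeval_eq_sum_superset) (auto simp: E split: if_splits)
  also have "\<dots> = (\<Sum>j<m. \<Sum>k\<in>K. V k * (X k * y) ^ (q ^ j))"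
    by (intro sum.cong refl) (simp add: E sum_distrib_left sum_distrib_right power_mult_distrib mult_ac)
  also have "\<dots> = (\<Sum>k\<in>K. (\<Sum>j<m. (X k * y) ^ (q ^ j)) * V k)"
    by (subst sum.swap) (simp add: sum_distrib_left sum_distrib_right mult_ac)
  finally show ?thesis .
qed

lemma qcomp_zero_mod_trace_form:
  assumes roots: "\<forall>k\<in>K. qeval q M (V k) = 0"
    and E: "\<And>j. E j = (if j < m then \<Sum>k\<in>K. V k * X k ^ (q ^ j) else (0 :: 'a))"
  shows "qcomp_zero_mod q m M E"
  unfolding qcomp_zero_mod_def
proof (rule vanishing_poly_dvd)
  fix y
  have "poly (pcompose (qpoly_poly q M) (qpoly_poly q E)) y
      = qeval q M (\<Sum>k\<in>K. (\<Sum>j<m. (X k * y) ^ (q ^ j)) * V k)"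
    by (simp add: poly_pcompose poly_qpoly_poly qeval_trace_form[OF E])
  also have "\<dots> = (\<Sum>k\<in>K. (\<Sum>j<m. (X k * y) ^ (q ^ j)) * qeval q M (V k))"
    by (rule qeval_Fq_linear) (simp add: trace_in_Fq)
  also have "\<dots> = 0"
    using roots by simp
  finally show "poly (pcompose (qpoly_poly q M) (qpoly_poly q E)) y = 0" .
qed

lemma qreverse_trace_form:
  assumes E: "\<And>j. E j = (if j < m then \<Sum>k\<in>K. V k * X k ^ (q ^ j) else (0 :: 'a))"
  shows "qreverse q m E j = (if j < m then \<Sum>k\<in>K. X k * V k ^ (q ^ j) else 0)"
proof (cases "j < m")
  case True
  have "((m - j) mod m + j) mod m = 0"
    using True by (cases "j = 0") simp_all
  then have X_fixed: "X k ^ (q ^ ((m - j) mod m + j)) = X k" for k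
    using frobenius_mod[of "X k" "(m - j) mod m + j"] by simp
  have "qreverse q m E j = (\<Sum>k\<in>K. V k * X k ^ (q ^ ((m - j) mod m))) ^ (q ^ j)"
    using True m_pos by (simp add: qreverse_def E)
  also have "\<dots> = (\<Sum>k\<in>K. V k ^ (q ^ j) * X k ^ (q ^ ((m - j) mod m + j)))"
    by (simp add: frobenius_sum power_mult_distrib power_q_power_q_power)
  also have "\<dots> = (\<Sum>k\<in>K. X k * V k ^ (q ^ j))"
    by (simp add: X_fixed mult.commute)
  finally show ?thesis using True by simp
qed (simp add: qreverse_def)

lemma key_equation:
  assumes roots: "\<forall>k\<in>K. qeval q M (V k) = 0"
    and support: "\<And>i. t < i \<Longrightarrow> M i = 0"
    and S: "\<And>j. j \<le> l \<Longrightarrow> S j = (\<Sum>k\<in>K. V k * X k ^ (q ^ j))"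
    and "t \<le> l"
  shows "(\<Sum>i=0..t. M i * S (l - i) ^ (q ^ i)) = (0 :: 'a)"
proof -
  have "(\<Sum>i=0..t. M i * S (l - i) ^ (q ^ i)) = (\<Sum>i=0..t. M i * (\<Sum>k\<in>K. X k ^ (q ^ l) * V k ^ (q ^ i)))"
  proof (intro sum.cong refl)
    fix i assume "i \<in> {0..t}"
    then have "i \<le> l" using \<open>t \<le> l\<close> by simp
    then show "M i * S (l - i) ^ (q ^ i) = M i * (\<Sum>k\<in>K. X k ^ (q ^ l) * V k ^ (q ^ i))"
      by (simp add: S frobenius_sum power_mult_distrib power_q_power_q_power mult.commute)
  qed
  also have "\<dots> = (\<Sum>k\<in>K. X k ^ (q ^ l) * (\<Sum>i\<le>t. M i * V k ^ (q ^ i)))"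
    by (simp add: atLeast0AtMost sum_distrib_left mult_ac sum.swap[of _ "{..t}"])
  also have "\<dots> = (\<Sum>k\<in>K. X k ^ (q ^ l) * qeval q M (V k))"
    using support by (simp add: qeval_eq_sum_atMost[of t M])
  also have "\<dots> = 0"
    using roots by simp
  finally show ?thesis .
qed

lemma reversed_syndrome_trace_form:
  assumes S: "\<And>j. j \<le> D \<Longrightarrow> S j = (\<Sum>k\<in>K. V k * X k ^ (q ^ j))" and "j \<le> D"
  shows "frobz q m (S (D - j)) (int j - int D)
       = (\<Sum>k\<in>K. X k * (V k ^ (q ^ nat (- int D mod int m))) ^ (q ^ j) :: 'a)"
proof -
  define s where "s = nat ((int j - int D) mod int m)"
  define c where "c = nat (- int D mod int m)"
  have int_s: "int s = (int j - int D) mod int m" using m_pos by (simp add: s_def)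
  have int_c: "int c = - int D mod int m" using m_pos by (simp add: c_def)
  have "int (c + j) mod int m = (- int D + int j) mod int m"
    by (simp only: of_nat_add int_c mod_add_left_eq)
  then have "int s mod int m = int (c + j) mod int m"
    by (simp add: int_s)
  then have V_shift: "V k ^ (q ^ s) = (V k ^ (q ^ c)) ^ (q ^ j)" for k
    unfolding power_q_power_q_power by (rule frobenius_cong)
  have "int (D - j + s) mod int m = (int D - int j + (int j - int D)) mod int m"
    using \<open>j \<le> D\<close> by (simp only: of_nat_add of_nat_diff int_s mod_add_right_eq)
  then have "int (D - j + s) mod int m = int 0 mod int m"
    by simp
  then have X_fixed: "X k ^ (q ^ (D - j + s)) = X k" for k
    using frobenius_cong[of "D - j + s" 0 "X k"] by simp
  have "frobz q m (S (D - j)) (int j - int D) = S (D - j) ^ (q ^ s)"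
    by (simp add: frobz_def s_def)
  also have "\<dots> = (\<Sum>k\<in>K. V k ^ (q ^ s) * X k ^ (q ^ (D - j + s)))"
    by (simp add: S frobenius_sum power_mult_distrib power_q_power_q_power)
  also have "\<dots> = (\<Sum>k\<in>K. X k * (V k ^ (q ^ c)) ^ (q ^ j))"
    by (simp add: V_shift X_fixed mult.commute)
  finally show ?thesis by (simp add: c_def)
qed

end

theorem theorem2:
  fixes q m n d \<tau> :: nat
    and \<alpha> :: "'a::{finite,field}"
    and c e :: "nat \<Rightarrow> 'a"
    and L :: "nat \<Rightarrow> nat \<Rightarrow> 'a" and V :: "nat \<Rightarrow> 'a"
    and \<Gamma> \<Lambda> :: "nat \<Rightarrow> 'a"
  assumes q_pp: "\<exists>p k. prime p \<and> k > 0 \<and> q = p ^ k"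
    and card: "card (UNIV :: 'a set) = q ^ m"
    and nm: "n \<le> m"
    and normal: "normal_elem q m \<alpha>"
    and d2: "d \<ge> 2"
    and c_code: "\<forall>i\<le>d - 2. (\<Sum>j<n. \<alpha> ^ (q ^ (i + j)) * c j) = 0"
    and e_rank: "rank_q q n e = \<tau>"
    and tau_le: "2 * \<tau> \<le> d - 1"
    and L_Fq: "\<forall>j\<in>{1..\<tau>}. \<forall>i<n. L j i \<in> Fq q"
    and e_decomp: "\<forall>i<n. e i = (\<Sum>j=1..\<tau>. L j i * V j)"
    and Gamma_min: "is_min_qpoly q (V ` {1..\<tau>}) \<Gamma>"
    and Lambda_min: "is_min_qpoly q ((\<lambda>j. \<Sum>i<n. L j i * \<alpha> ^ (q ^ i)) ` {1..\<tau>}) \<Lambda>"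
  shows
    "let r = (\<lambda>i. c i + e i);
         S = (\<lambda>l. \<Sum>i<n. \<alpha> ^ (q ^ (i + l)) * r i);
         St = (\<lambda>l. frobz q m (S (d - 2 - l)) (int l - int d + 2));
         ee = (\<lambda>i. if i < n then e i else 0);
         E = (\<lambda>j. if j < m then (\<Sum>i<m. ee i * \<alpha> ^ (q ^ (i + j))) else 0)
     in qcomp_zero_mod q m \<Gamma> E \<and> qcomp_zero_mod q m \<Lambda> (qreverse q m E) \<and>
        (\<forall>l\<in>{\<tau>..d - 2}. (\<Sum>i=0..\<tau>. \<Gamma> i * S (l - i) ^ (q ^ i)) = 0) \<and>
        (\<forall>l\<in>{\<tau>..d - 2}. (\<Sum>i=0..\<tau>. \<Lambda> i * St (l - i) ^ (q ^ i)) = 0)"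
proof -
  define X where "X k = (\<Sum>i<n. L k i * \<alpha> ^ (q ^ i))" for k
  define S where "S = (\<lambda>l. \<Sum>i<n. \<alpha> ^ (q ^ (i + l)) * (c i + e i))"
  define St where "St = (\<lambda>l. frobz q m (S (d - 2 - l)) (int l - int d + 2))"
  define E where "E = (\<lambda>j. if j < m then \<Sum>i<m. (if i < n then e i else 0) * \<alpha> ^ (q ^ (i + j)) else 0)"
  have S_trace: "S j = (\<Sum>k\<in>{1..\<tau>}. V k * X k ^ (q ^ j))" if "j \<le> d - 2" for j
    unfolding S_def X_def using syndrome_trace_form[OF card q_pp c_code L_Fq e_decomp that] by simp
  have E_trace: "E j = (if j < m then \<Sum>k\<in>{1..\<tau>}. V k * X k ^ (q ^ j) else 0)" for j
    unfolding E_def X_def using q_transform_trace_form[OF card q_pp nm L_Fq e_decomp] by simp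
  have St_trace: "St j = (\<Sum>k\<in>{1..\<tau>}. X k * (V k ^ (q ^ nat (- int (d - 2) mod int m))) ^ (q ^ j))"
    if "j \<le> d - 2" for j
  proof -
    have "int j - int d + 2 = int j - int (d - 2)" using d2 by simp
    then show ?thesis
      unfolding St_def by (simp only:) (rule reversed_syndrome_trace_form[OF card q_pp S_trace that])
  qed
  have Gamma_roots: "\<forall>k\<in>{1..\<tau>}. qeval q \<Gamma> (V k) = 0"
    using Gamma_min by (simp add: is_min_qpoly_def)
  have Lambda_roots: "\<forall>k\<in>{1..\<tau>}. qeval q \<Lambda> (X k) = 0"
    using Lambda_min by (simp add: is_min_qpoly_def X_def)
  have Gamma_support: "\<Gamma> i = 0" and Lambda_support: "\<Lambda> i = 0" if "\<tau> < i" for i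
    using min_qpoly_image_coeff_eq_0[OF card q_pp _ Gamma_min] min_qpoly_image_coeff_eq_0[OF card q_pp _ Lambda_min]
      that by simp_all
  have "qcomp_zero_mod q m \<Gamma> E"
    by (rule qcomp_zero_mod_trace_form[OF card q_pp Gamma_roots E_trace])
  moreover have "qcomp_zero_mod q m \<Lambda> (qreverse q m E)"
    by (rule qcomp_zero_mod_trace_form[OF card q_pp Lambda_roots qreverse_trace_form[OF card q_pp E_trace]])
  moreover have "\<forall>l\<in>{\<tau>..d - 2}. (\<Sum>i=0..\<tau>. \<Gamma> i * S (l - i) ^ (q ^ i)) = 0"
    using key_equation[OF card q_pp Gamma_roots Gamma_support S_trace] by auto
  moreover have "\<forall>l\<in>{\<tau>..d - 2}. (\<Sum>i=0..\<tau>. \<Lambda> i * St (l - i) ^ (q ^ i)) = 0"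
    using key_equation[OF card q_pp Lambda_roots Lambda_support St_trace] by auto
  ultimately show ?thesis
    unfolding Let_def S_def St_def E_def by blast
qed

end
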